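(* Let $m\ge1$ and let $X_1,X_2,\dots$ be i.i.d. random words in $\{0,1\}^m$, where word $\mathbf{w}_i$ has probability $P_i$ and the words are indexed so that $P_1\ge P_2\ge\dots\ge P_{2^m}$. Let $\mathbf{y}_1,\dots,\mathbf{y}_{2^m}$ be the distinct words of $\{0,1\}^m$ listed in order of nondecreasing cost, with $c_i=c(\mathbf{y}_i)$, and let $\phi$ be the direct shaping encoder (described in the context). Let $C_t=c(\phi(X_1,\dots,X_t))/t$, where $c(\phi(X_1,\dots,X_t))$ is the sum of the costs of the first $t$ output codewords. Then the asymptotic expected average cost satisfies $$C_\infty=\lim_{t\to\infty}E(C_t)=\sum_i P_ic_i.$$
   Context: Direct shaping code: the encoder maintains a list of all $2^m$ input words paired with frequency counts $n_k$ (initially all $0$, words ordered lexicographically), kept in nonincreasing order of counts. When input word $\mathbf{x}$ arrives, it is mapped to the output word $\mathbf{y}_k$ occupying the same position $k$ as $\mathbf{x}$ in the list; then the count of $\mathbf{x}$ is increased by one, from $n$ to $n+1$, and $\mathbf{x}$ is moved above all pairs with counts less than or equal to $n+1$. Costs: each codeword $\mathbf{y}$ has a cost $c(\mathbf{y})$ (e.g. for SLC flash, the number of $0$ symbols in $\mathbf{y}$), and the cost of a sequence of codewords is the sum of their costs. No channel errors are assumed. *)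

theory Defs
  imports Complex_Main
begin

(* Binary words of length m are modelled as bool lists (False = 0, True = 1). *)

fun lex_words :: "nat \<Rightarrow> bool list list" where
  "lex_words 0 = [[]]"
| "lex_words (Suc m) = map (Cons False) (lex_words m) @ map (Cons True) (lex_words m)"

(* 0-based position of x in the list L *)
definition pos :: "'a list \<Rightarrow> 'a \<Rightarrow> nat" where
  "pos L x = length (takeWhile (\<lambda>z. z \<noteq> x) L)"

definition move_up :: "('a \<Rightarrow> nat) \<Rightarrow> 'a \<Rightarrow> 'a list \<Rightarrow> 'a list" where
  "move_up n x L = takeWhile (\<lambda>z. n z > n x) L @ [x] @ dropWhile (\<lambda>z. n z > n x) L"

(* Direct shaping encoder: ys is the output-word list (ordered by nondecreasing cost),
   the state is the current list of input words together with their counts. *)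
fun encode :: "'a list \<Rightarrow> 'a list \<times> ('a \<Rightarrow> nat) \<Rightarrow> 'a list \<Rightarrow> 'a list" where
  "encode ys st [] = []"
| "encode ys (L, n) (x # xs) =
     (let n' = n(x := Suc (n x));
          L' = move_up n' x (removeAll x L)
      in ys ! pos L x # encode ys (L', n') xs)"

definition phi :: "nat \<Rightarrow> bool list list \<Rightarrow> bool list list \<Rightarrow> bool list list" where
  "phi m ys xs = encode ys (lex_words m, (\<lambda>_. 0)) xs"

(* E(C_t): expectation over i.i.d. inputs X_1..X_t with distribution P on {0,1}^m *)
definition expected_avg_cost ::
  "nat \<Rightarrow> (bool list \<Rightarrow> real) \<Rightarrow> (bool list \<Rightarrow> real) \<Rightarrow> bool list list \<Rightarrow> nat \<Rightarrow> real" where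
  "expected_avg_cost m P c ys t =
     (\<Sum>xs\<in>{xs. length xs = t \<and> (\<forall>x\<in>set xs. length x = m)}.
        prod_list (map P xs) * (sum_list (map c (phi m ys xs)) / real t))"

end

theory Submission
  imports Defs "HOL-Library.Multiset"
begin

(* After t inputs the encoder's list is sorted by the empirical counts, and the expected cost of
   the next codeword given the past is sum_x P x * c (y at the position of x in the list). Whenever
   every pair with P a > P b has count a > count b, the list orders the words by probability and
   this conditional cost is exactly sum_i P_i c_i. By Chebyshev's inequality a fixed pair is
   misordered after t inputs with probability O(1/t), so the expected cost of the t-th codeword
   tends to sum_i P_i c_i, and hence so does its Cesaro mean, the expected average cost. *)

fun shaping_step :: "'a list \<times> ('a \<Rightarrow> nat) \<Rightarrow> 'a \<Rightarrow> 'a list \<times> ('a \<Rightarrow> nat)" where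
  "shaping_step (L, n) x =
     (let n' = n(x := Suc (n x)) in (move_up n' x (removeAll x L), n'))"

lemma encode_append_single:
  "encode ys s (xs @ [x]) = encode ys s xs @ [ys ! pos (fst (foldl shaping_step s xs)) x]"
  by (induction xs arbitrary: s) (auto simp: Let_def)

lemma set_move_up: "set (move_up n x L) = insert x (set L)"
proof -
  have "set L = set (takeWhile (\<lambda>z. n x < n z) L) \<union> set (dropWhile (\<lambda>z. n x < n z) L)"
    by (metis set_append takeWhile_dropWhile_id)
  then show ?thesis
    unfolding move_up_def by auto
qed

lemma distinct_move_up:
  assumes "x \<notin> set L" "distinct L"
  shows "distinct (move_up n x L)"
proof -
  let ?T = "takeWhile (\<lambda>z. n x < n z) L" and ?D = "dropWhile (\<lambda>z. n x < n z) L"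
  have "distinct (?T @ ?D)" "x \<notin> set (?T @ ?D)"
    using assms by simp_all
  then show ?thesis
    unfolding move_up_def by (auto simp del: takeWhile_dropWhile_id)
qed

lemma sorted_move_up:
  assumes "sorted_wrt (\<lambda>a b. n b \<le> n a) L"
  shows "sorted_wrt (\<lambda>a b. n b \<le> n a) (move_up n x L)"
proof -
  let ?T = "takeWhile (\<lambda>z. n x < n z) L" and ?D = "dropWhile (\<lambda>z. n x < n z) L"
  have sorted: "sorted_wrt (\<lambda>a b. n b \<le> n a) (?T @ ?D)"
    using assms by simp
  have above: "n x < n z" if "z \<in> set ?T" for z
    using that by (rule set_takeWhileD[THEN conjunct2])
  have below: "n z \<le> n x" if z: "z \<in> set ?D" for z
  proof -
    obtain d D where D: "?D = d # D"
      using z by (cases ?D) auto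
    then have "\<not> n x < n d"
      using hd_dropWhile[of "\<lambda>z. n x < n z" L] by auto
    moreover have "n z \<le> n d"
      using z sorted D by (auto simp: sorted_wrt_append simp del: takeWhile_dropWhile_id)
    ultimately show ?thesis by simp
  qed
  show ?thesis
    using sorted above below unfolding move_up_def
    by (fastforce simp: sorted_wrt_append simp del: takeWhile_dropWhile_id
        intro: order.trans less_imp_le)
qed

definition ranking :: "'a set \<Rightarrow> ('a \<Rightarrow> nat) \<Rightarrow> 'a list \<Rightarrow> bool" where
  "ranking W n L \<longleftrightarrow> distinct L \<and> set L = W \<and> sorted_wrt (\<lambda>a b. n b \<le> n a) L"

lemma ranking_shaping_step:
  assumes "ranking W n L" "x \<in> W"
  shows "ranking W (snd (shaping_step (L, n) x)) (fst (shaping_step (L, n) x))"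
proof -
  let ?n' = "n(x := Suc (n x))" and ?R = "removeAll x L"
  have "sorted_wrt (\<lambda>a b. ?n' b \<le> ?n' a) ?R"
    using assms(1) unfolding ranking_def removeAll_filter_not_eq
    by (auto intro: sorted_wrt_filter sorted_wrt_mono_rel[rotated])
  then have "sorted_wrt (\<lambda>a b. ?n' b \<le> ?n' a) (move_up ?n' x ?R)"
    by (rule sorted_move_up)
  moreover have "distinct (move_up ?n' x ?R)"
    using assms(1) unfolding ranking_def by (simp add: distinct_move_up distinct_removeAll)
  moreover have "set (move_up ?n' x ?R) = W"
    using assms unfolding ranking_def by (auto simp: set_move_up)
  ultimately show ?thesis
    unfolding ranking_def by (simp add: Let_def)
qed

lemma snd_foldl_shaping_step:
  "snd (foldl shaping_step (L, n) xs) = (\<lambda>z. n z + count_list xs z)"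
  by (induction xs arbitrary: L n) (auto simp: Let_def)

lemma ranking_foldl_shaping_step:
  assumes "ranking W n L" "set xs \<subseteq> W"
  shows "ranking W (\<lambda>z. n z + count_list xs z) (fst (foldl shaping_step (L, n) xs))"
proof -
  have "ranking W (snd (foldl shaping_step s xs)) (fst (foldl shaping_step s xs))"
    if "ranking W (snd s) (fst s)" for s
    using that assms(2)
  proof (induction xs arbitrary: s)
    case (Cons x xs)
    then show ?case
      using ranking_shaping_step[of W "snd s" "fst s" x] by simp
  qed simp
  then show ?thesis
    using assms(1) snd_foldl_shaping_step[of L n xs] by fastforce
qed

lemma map_eq_if_mset_eq_sorted_desc:
  fixes f :: "'a \<Rightarrow> 'b::linorder"
  assumes "mset xs = mset ys"
    and "sorted_wrt (\<lambda>a b. f a \<ge> f b) xs" "sorted_wrt (\<lambda>a b. f a \<ge> f b) ys"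
  shows "map f xs = map f ys"
proof -
  have "sorted (rev (map f xs))" "sorted (rev (map f ys))"
    using assms(2,3) by (simp_all add: sorted_wrt_rev sorted_wrt_map)
  moreover have "mset (rev (map f xs)) = mset (rev (map f ys))"
    using assms(1) by simp
  ultimately have "rev (map f xs) = rev (map f ys)"
    by (metis properties_for_sort)
  then show ?thesis by simp
qed

lemma pos_nth: "distinct L \<Longrightarrow> i < length L \<Longrightarrow> pos L (L ! i) = i"
proof (induction L arbitrary: i)
  case (Cons a L)
  then show ?case by (cases i) (auto simp: pos_def)
qed simp

lemma sum_set_pos:
  assumes "distinct L"
  shows "(\<Sum>x\<in>set L. G x (pos L x)) = (\<Sum>i<length L. G (L ! i) i)"
  using sum.reindex_bij_betw[OF bij_betw_nth[OF assms, of "{..<length L}" "set L"],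
      of "\<lambda>x. G x (pos L x)"] assms
  by (simp add: pos_nth)

lemma set_lex_words: "set (lex_words m) = {w. length w = m}"
proof (induction m)
  case (Suc m)
  have "w \<in> set (lex_words (Suc m))" if "length w = Suc m" for w
    using that Suc by (cases w) (auto intro: image_eqI simp: image_iff)
  then show ?case
    using Suc by auto
qed simp

lemma distinct_lex_words: "distinct (lex_words m)"
  by (induction m) (auto simp: distinct_map)

lemma Cesaro_mean_null:
  fixes h :: "nat \<Rightarrow> real"
  assumes "h \<longlonglongrightarrow> 0"
  shows "(\<lambda>t. (\<Sum>s<t. h s) / real t) \<longlonglongrightarrow> 0"
proof (rule tendstoI)
  fix \<epsilon> :: real assume "0 < \<epsilon>"
  then obtain N where N: "\<And>s. N \<le> s \<Longrightarrow> \<bar>h s\<bar> < \<epsilon> / 2"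
    using LIMSEQ_D[OF assms, of "\<epsilon> / 2"] by auto
  define D where "D = (\<Sum>s<N. \<bar>h s\<bar>)"
  have "\<forall>\<^sub>F t in sequentially. D / real t < \<epsilon> / 2"
    using \<open>0 < \<epsilon>\<close> by (intro order_tendstoD(2)[OF lim_const_over_n]) simp
  moreover have "\<forall>\<^sub>F t in sequentially. N \<le> t \<and> 0 < t"
    by (rule eventually_sequentiallyI[of "Suc N"]) simp
  ultimately show "\<forall>\<^sub>F t in sequentially. dist ((\<Sum>s<t. h s) / real t) 0 < \<epsilon>"
  proof eventually_elim
    case (elim t)
    have "\<bar>\<Sum>s<t. h s\<bar> \<le> (\<Sum>s<t. \<bar>h s\<bar>)"
      by (rule sum_abs)
    also have "\<dots> = D + (\<Sum>s\<in>{N..<t}. \<bar>h s\<bar>)"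
      using elim unfolding D_def by (metis sum.atLeastLessThan_concat lessThan_atLeast0 zero_le)
    also have "\<dots> \<le> D + real (t - N) * (\<epsilon> / 2)"
      using sum_mono[of "{N..<t}" "\<lambda>s. \<bar>h s\<bar>" "\<lambda>_. \<epsilon> / 2"] N by (simp add: less_imp_le)
    also have "\<dots> \<le> D + real t * (\<epsilon> / 2)"
      using \<open>0 < \<epsilon>\<close> by (intro add_left_mono mult_right_mono) auto
    finally have "\<bar>\<Sum>s<t. h s\<bar> / real t \<le> D / real t + \<epsilon> / 2"
      using elim by (simp add: field_simps)
    then have "\<bar>\<Sum>s<t. h s\<bar> / real t < \<epsilon>"
      using elim(1) by linarith
    then show ?case
      by (simp add: dist_real_def abs_divide)
  qed
qed

lemma Cesaro_mean_tendsto: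
  fixes g :: "nat \<Rightarrow> real"
  assumes "g \<longlonglongrightarrow> V"
  shows "(\<lambda>t. (\<Sum>s<t. g s) / real t) \<longlonglongrightarrow> V"
proof -
  have "(\<lambda>t. (\<Sum>s<t. g s - V) / real t + V) \<longlonglongrightarrow> 0 + V"
    using assms by (intro tendsto_add Cesaro_mean_null) (simp_all add: LIM_zero)
  moreover have "\<forall>\<^sub>F t in sequentially. (\<Sum>s<t. g s - V) / real t + V = (\<Sum>s<t. g s) / real t"
    by (rule eventually_sequentiallyI[of 1]) (simp add: sum_subtractf field_simps)
  ultimately show ?thesis
    by (simp add: tendsto_cong)
qed

definition iid_expectation :: "'a set \<Rightarrow> ('a \<Rightarrow> real) \<Rightarrow> nat \<Rightarrow> ('a list \<Rightarrow> real) \<Rightarrow> real" where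
  "iid_expectation W P t F = (\<Sum>xs | set xs \<subseteq> W \<and> length xs = t. prod_list (map P xs) * F xs)"

lemma iid_expectation_0 [simp]: "iid_expectation W P 0 F = F []"
proof -
  have "{xs. set xs \<subseteq> W \<and> length xs = 0} = {[]}" by auto
  then show ?thesis by (simp add: iid_expectation_def)
qed

lemma iid_expectation_Suc:
  assumes "finite W"
  shows "iid_expectation W P (Suc t) F = iid_expectation W P t (\<lambda>xs. \<Sum>x\<in>W. P x * F (xs @ [x]))"
proof -
  let ?A = "\<lambda>t. {xs. set xs \<subseteq> W \<and> length xs = t}"
  have "?A (Suc t) = (\<lambda>(xs, x). xs @ [x]) ` (?A t \<times> W)"
  proof (intro equalityI subsetI)
    fix ys assume "ys \<in> ?A (Suc t)"
    then show "ys \<in> (\<lambda>(xs, x). xs @ [x]) ` (?A t \<times> W)"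
      by (intro image_eqI[of _ _ "(butlast ys, last ys)"])
        (auto simp: in_set_butlastD dest!: length_Suc_conv_rev[THEN iffD1])
  qed auto
  moreover have "inj_on (\<lambda>(xs, x). xs @ [x]) (?A t \<times> W)"
    by (auto simp: inj_on_def)
  ultimately show ?thesis
    unfolding iid_expectation_def
    by (simp add: sum.reindex sum.cartesian_product sum_distrib_left)
      (auto intro!: sum.cong simp: mult_ac)
qed

lemma iid_expectation_add:
  "iid_expectation W P t (\<lambda>xs. F xs + G xs) = iid_expectation W P t F + iid_expectation W P t G"
  by (simp add: iid_expectation_def distrib_left sum.distrib)

lemma iid_expectation_diff:
  "iid_expectation W P t (\<lambda>xs. F xs - G xs) = iid_expectation W P t F - iid_expectation W P t G"
  by (simp add: iid_expectation_def right_diff_distrib sum_subtractf)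

lemma iid_expectation_scale:
  "iid_expectation W P t (\<lambda>xs. k * F xs) = k * iid_expectation W P t F"
  by (simp add: iid_expectation_def sum_distrib_left mult_ac)

lemma iid_expectation_sum:
  "iid_expectation W P t (\<lambda>xs. \<Sum>i\<in>I. F i xs) = (\<Sum>i\<in>I. iid_expectation W P t (F i))"
  by (simp add: iid_expectation_def sum_distrib_left sum.swap[of _ I])

lemma iid_expectation_const:
  assumes "finite W" "sum P W = 1"
  shows "iid_expectation W P t (\<lambda>_. k) = k"
  by (induction t) (simp_all add: iid_expectation_Suc assms sum_distrib_right[symmetric])

locale finite_distribution =
  fixes W :: "'a set" and P :: "'a \<Rightarrow> real"
  assumes finite_W: "finite W"
    and P_nonneg: "x \<in> W \<Longrightarrow> 0 \<le> P x"
    and sum_P: "sum P W = 1"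
begin

lemma P_le_1: "x \<in> W \<Longrightarrow> P x \<le> 1"
  using member_le_sum[of x W P] P_nonneg finite_W sum_P by simp

lemma prod_list_map_nonneg: "set xs \<subseteq> W \<Longrightarrow> 0 \<le> prod_list (map P xs)"
  using P_nonneg by (induction xs) auto

lemma iid_expectation_mono:
  assumes "\<And>xs. set xs \<subseteq> W \<Longrightarrow> length xs = t \<Longrightarrow> F xs \<le> G xs"
  shows "iid_expectation W P t F \<le> iid_expectation W P t G"
  unfolding iid_expectation_def using assms prod_list_map_nonneg
  by (auto intro!: sum_mono mult_left_mono)

lemma abs_iid_expectation_le:
  "\<bar>iid_expectation W P t F\<bar> \<le> iid_expectation W P t (\<lambda>xs. \<bar>F xs\<bar>)"
  unfolding iid_expectation_def using prod_list_map_nonneg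
  by (auto simp: abs_mult intro!: order.trans[OF sum_abs] sum_mono)

lemma iid_expectation_sum_list_square:
  assumes "(\<Sum>x\<in>W. P x * f x) = 0"
  shows "iid_expectation W P t (\<lambda>xs. (sum_list (map f xs))\<^sup>2) = real t * (\<Sum>x\<in>W. P x * (f x)\<^sup>2)"
proof (induction t)
  case (Suc t)
  let ?K = "\<Sum>x\<in>W. P x * (f x)\<^sup>2"
  have step: "(\<Sum>x\<in>W. P x * (sum_list (map f (xs @ [x])))\<^sup>2) = (sum_list (map f xs))\<^sup>2 + ?K"
    for xs
  proof -
    have "(\<Sum>x\<in>W. P x * (sum_list (map f (xs @ [x])))\<^sup>2)
        = (sum_list (map f xs))\<^sup>2 * sum P W + 2 * sum_list (map f xs) * (\<Sum>x\<in>W. P x * f x) + ?K"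
      by (simp add: power2_sum algebra_simps sum.distrib sum_distrib_left sum_distrib_right)
    then show ?thesis
      using assms sum_P by simp
  qed
  have "iid_expectation W P (Suc t) (\<lambda>xs. (sum_list (map f xs))\<^sup>2)
      = iid_expectation W P t (\<lambda>xs. (sum_list (map f xs))\<^sup>2 + ?K)"
    by (simp only: iid_expectation_Suc[OF finite_W] step)
  also have "\<dots> = real (Suc t) * ?K"
    using Suc by (simp add: iid_expectation_add iid_expectation_const finite_W sum_P algebra_simps)
  finally show ?case .
qed simp

lemma Chebyshev_lower_tail:
  assumes "(\<Sum>x\<in>W. P x * f x) = 0" "0 < \<delta>" "0 < t"
  shows "iid_expectation W P t (\<lambda>xs. of_bool (sum_list (map f xs) \<le> - (real t * \<delta>)))
    \<le> (\<Sum>x\<in>W. P x * (f x)\<^sup>2) / (real t * \<delta>\<^sup>2)"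
proof -
  have "of_bool (S \<le> - (real t * \<delta>)) \<le> S\<^sup>2 / (real t * \<delta>)\<^sup>2" for S
  proof -
    have "(real t * \<delta>)\<^sup>2 \<le> (- S)\<^sup>2" if "S \<le> - (real t * \<delta>)"
      using that assms(2,3) by (intro power_mono) auto
    then show ?thesis
      using assms(2,3) by auto
  qed
  then have "iid_expectation W P t (\<lambda>xs. of_bool (sum_list (map f xs) \<le> - (real t * \<delta>)))
      \<le> iid_expectation W P t (\<lambda>xs. (sum_list (map f xs))\<^sup>2 / (real t * \<delta>)\<^sup>2)"
    by (intro iid_expectation_mono)
  also have "\<dots> = iid_expectation W P t (\<lambda>xs. (sum_list (map f xs))\<^sup>2) / (real t * \<delta>)\<^sup>2"
    by (simp add: iid_expectation_def sum_divide_distrib)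
  also have "\<dots> = (\<Sum>x\<in>W. P x * (f x)\<^sup>2) / (real t * \<delta>\<^sup>2)"
    unfolding iid_expectation_sum_list_square[OF assms(1)] using assms(2,3)
    by (simp add: power2_eq_square)
  finally show ?thesis .
qed

lemma iid_expectation_count_le_count:
  assumes "a \<in> W" "b \<in> W" "P b < P a" "0 < t"
  shows "iid_expectation W P t (\<lambda>xs. of_bool (count_list xs a \<le> count_list xs b))
    \<le> 4 / (real t * (P a - P b)\<^sup>2)"
proof -
  define d where "d = P a - P b"
  \<comment> \<open>count a - count b - t d is a sum of t i.i.d. centred increments f, each bounded by 2\<close>
  define f where "f x = of_bool (x = a) - of_bool (x = b) - d" for x
  have d: "0 < d" "d \<le> 1"
    using assms(3) P_le_1[OF assms(1)] P_nonneg[OF assms(2)] unfolding d_def by auto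
  have "a \<noteq> b" using assms(3) by auto
  have "(\<Sum>x\<in>W. P x * f x)
      = (\<Sum>x\<in>W. P x * of_bool (x = a)) - (\<Sum>x\<in>W. P x * of_bool (x = b)) - d * sum P W"
    unfolding f_def right_diff_distrib sum_subtractf by (simp add: sum_distrib_left mult.commute)
  then have mean: "(\<Sum>x\<in>W. P x * f x) = 0"
    using assms(1,2) finite_W sum_P by (simp add: d_def)
  have "(\<Sum>x\<in>W. P x * (f x)\<^sup>2) \<le> (\<Sum>x\<in>W. P x * 4)"
  proof (intro sum_mono mult_left_mono)
    fix x
    have "\<bar>f x\<bar> \<le> 2"
      using d by (auto simp: f_def)
    then show "(f x)\<^sup>2 \<le> 4"
      using power2_le_iff_abs_le[of 2 "f x"] by simp
  qed (use P_nonneg in auto)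
  then have variance: "(\<Sum>x\<in>W. P x * (f x)\<^sup>2) \<le> 4"
    using sum_P by (simp add: sum_distrib_right[symmetric])
  have sum_f: "sum_list (map f xs) = real (count_list xs a) - real (count_list xs b) - real (length xs) * d"
    for xs
    by (induction xs) (auto simp: f_def algebra_simps)
  have "iid_expectation W P t (\<lambda>xs. of_bool (count_list xs a \<le> count_list xs b))
      \<le> iid_expectation W P t (\<lambda>xs. of_bool (sum_list (map f xs) \<le> - (real t * d)))"
    by (intro iid_expectation_mono) (auto simp: sum_f)
  also have "\<dots> \<le> (\<Sum>x\<in>W. P x * (f x)\<^sup>2) / (real t * d\<^sup>2)"
    using mean d assms(4) by (intro Chebyshev_lower_tail) auto
  also have "\<dots> \<le> 4 / (real t * d\<^sup>2)"
    using variance d assms(4) by (intro divide_right_mono) auto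
  finally show ?thesis
    unfolding d_def .
qed

definition step_cost :: "('b \<Rightarrow> real) \<Rightarrow> 'b list \<Rightarrow> 'a list \<Rightarrow> real" where
  "step_cost c ys L = (\<Sum>x\<in>W. P x * c (ys ! pos L x))"

lemma iid_expectation_encode_cost:
  "iid_expectation W P t (\<lambda>xs. sum_list (map c (encode ys s xs)))
    = (\<Sum>r<t. iid_expectation W P r (\<lambda>xs. step_cost c ys (fst (foldl shaping_step s xs))))"
proof (induction t)
  case (Suc t)
  have "(\<Sum>x\<in>W. P x * sum_list (map c (encode ys s (xs @ [x]))))
      = sum_list (map c (encode ys s xs)) + step_cost c ys (fst (foldl shaping_step s xs))" for xs
    using sum_P
    by (simp add: encode_append_single step_cost_def distrib_left sum.distrib
        sum_distrib_right[symmetric])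
  then show ?case
    using Suc by (simp add: iid_expectation_Suc[OF finite_W] iid_expectation_add)
qed simp

end

locale ranked_source = finite_distribution +
  fixes ws :: "'a list"
  assumes distinct_ws: "distinct ws"
    and set_ws: "set ws = W"
    and sorted_ws: "sorted_wrt (\<lambda>a b. P a \<ge> P b) ws"
begin

definition optimal_cost :: "('b \<Rightarrow> real) \<Rightarrow> 'b list \<Rightarrow> real" where
  "optimal_cost c ys = (\<Sum>i<length ws. P (ws ! i) * c (ys ! i))"

lemma length_ranking:
  assumes "ranking W n L"
  shows "length L = length ws"
  using assms distinct_card[of L] distinct_card[OF distinct_ws] set_ws by (simp add: ranking_def)

lemma step_cost_ranking:
  assumes "ranking W n L"
  shows "step_cost c ys L = (\<Sum>i<length ws. P (L ! i) * c (ys ! i))"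
  using assms sum_set_pos[of L "\<lambda>x i. P x * c (ys ! i)"] length_ranking[OF assms]
  by (simp add: step_cost_def ranking_def)

lemma step_cost_consistent_ranking:
  assumes "ranking W n L" and consistent: "\<And>a b. a \<in> W \<Longrightarrow> b \<in> W \<Longrightarrow> P b < P a \<Longrightarrow> n b < n a"
  shows "step_cost c ys L = optimal_cost c ys"
proof -
  have L: "distinct L" "set L = W" "sorted_wrt (\<lambda>a b. n b \<le> n a) L"
    using assms(1) by (simp_all add: ranking_def)
  have "P b \<le> P a" if "a \<in> set L" "b \<in> set L" "n b \<le> n a" for a b
    using consistent[of b a] that L(2) by (meson leD not_le_imp_less)
  then have "sorted_wrt (\<lambda>a b. P a \<ge> P b) L"
    using L(3) by (rule sorted_wrt_mono_rel)
  moreover have "mset L = mset ws"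
    using L(1,2) distinct_ws set_ws set_eq_iff_mset_eq_distinct by blast
  ultimately have "map P L = map P ws"
    using sorted_ws by (intro map_eq_if_mset_eq_sorted_desc)
  then have "P (L ! i) = P (ws ! i)" if "i < length ws" for i
    using that length_ranking[OF assms(1)] by (metis nth_map)
  then show ?thesis
    by (simp add: step_cost_ranking[OF assms(1)] optimal_cost_def)
qed

lemma step_cost_deviation:
  assumes "ranking W n L"
  shows "\<bar>step_cost c ys L - optimal_cost c ys\<bar> \<le> (\<Sum>i<length ws. \<bar>c (ys ! i)\<bar>)"
proof -
  have "\<bar>(P (L ! i) - P (ws ! i)) * c (ys ! i)\<bar> \<le> \<bar>c (ys ! i)\<bar>" if "i < length ws" for i
  proof -
    have "set L = W"
      using assms by (simp add: ranking_def)
    then have "L ! i \<in> W" "ws ! i \<in> W"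
      using that length_ranking[OF assms] set_ws nth_mem[of i L] nth_mem[of i ws] by simp_all
    then have "\<bar>P (L ! i) - P (ws ! i)\<bar> \<le> 1"
      using P_nonneg P_le_1 by (fastforce simp: abs_le_iff)
    then show ?thesis
      by (simp add: abs_mult mult_left_le_one_le)
  qed
  then have "(\<Sum>i<length ws. \<bar>(P (L ! i) - P (ws ! i)) * c (ys ! i)\<bar>) \<le> (\<Sum>i<length ws. \<bar>c (ys ! i)\<bar>)"
    by (intro sum_mono) simp
  then show ?thesis
    unfolding step_cost_ranking[OF assms] optimal_cost_def sum_subtractf[symmetric] left_diff_distrib[symmetric]
    by (rule order.trans[OF sum_abs])
qed

definition misordered_pairs :: "('a \<times> 'a) set" where
  "misordered_pairs = {(a, b) \<in> W \<times> W. P b < P a}"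

lemma finite_misordered_pairs: "finite misordered_pairs"
  using finite_W by (simp add: misordered_pairs_def finite_subset[of _ "W \<times> W"] subset_iff)

lemma step_cost_deviation_misordered:
  assumes "ranking W (\<lambda>_. 0) L\<^sub>0" "set xs \<subseteq> W"
  shows "\<bar>step_cost c ys (fst (foldl shaping_step (L\<^sub>0, \<lambda>_. 0) xs)) - optimal_cost c ys\<bar>
    \<le> (\<Sum>i<length ws. \<bar>c (ys ! i)\<bar>)
        * (\<Sum>(a, b)\<in>misordered_pairs. of_bool (count_list xs a \<le> count_list xs b))"
    (is "\<bar>step_cost c ys ?L - _\<bar> \<le> ?B * ?N")
proof -
  have rank: "ranking W (count_list xs) ?L"
    using ranking_foldl_shaping_step[OF assms] by simp
  have "0 \<le> ?B" "0 \<le> ?N"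
    by (auto intro: sum_nonneg)
  show ?thesis
  proof (cases "\<exists>(a, b)\<in>misordered_pairs. count_list xs a \<le> count_list xs b")
    case True
    then obtain a b where "(a, b) \<in> misordered_pairs" "count_list xs a \<le> count_list xs b"
      by auto
    then have "1 \<le> ?N"
      using finite_misordered_pairs by (auto simp: split_beta card_gt_0_iff Suc_le_eq)
    then have "?B \<le> ?B * ?N"
      using mult_left_mono[OF \<open>1 \<le> ?N\<close> \<open>0 \<le> ?B\<close>] by simp
    then show ?thesis
      using step_cost_deviation[OF rank, of c ys] by linarith
  next
    case False
    then have "step_cost c ys ?L = optimal_cost c ys"
      by (intro step_cost_consistent_ranking[OF rank]) (fastforce simp: misordered_pairs_def not_le)
    then show ?thesis
      using \<open>0 \<le> ?B\<close> \<open>0 \<le> ?N\<close> by simp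
  qed
qed

lemma expected_step_cost_deviation:
  assumes "ranking W (\<lambda>_. 0) L\<^sub>0" "0 < t"
  shows "\<bar>iid_expectation W P t (\<lambda>xs. step_cost c ys (fst (foldl shaping_step (L\<^sub>0, \<lambda>_. 0) xs)))
      - optimal_cost c ys\<bar>
    \<le> (\<Sum>i<length ws. \<bar>c (ys ! i)\<bar>) * (\<Sum>(a, b)\<in>misordered_pairs. 4 / (P a - P b)\<^sup>2) / real t"
    (is "\<bar>iid_expectation W P t ?S - _\<bar> \<le> ?B * _ / _")
proof -
  have "\<bar>iid_expectation W P t ?S - optimal_cost c ys\<bar>
      = \<bar>iid_expectation W P t (\<lambda>xs. ?S xs - optimal_cost c ys)\<bar>"
    by (simp add: iid_expectation_diff iid_expectation_const finite_W sum_P)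
  also have "\<dots> \<le> iid_expectation W P t
      (\<lambda>xs. ?B * (\<Sum>(a, b)\<in>misordered_pairs. of_bool (count_list xs a \<le> count_list xs b)))"
    by (intro order.trans[OF abs_iid_expectation_le] iid_expectation_mono
        step_cost_deviation_misordered assms(1))
  also have "\<dots> = ?B * (\<Sum>(a, b)\<in>misordered_pairs.
      iid_expectation W P t (\<lambda>xs. of_bool (count_list xs a \<le> count_list xs b)))"
    by (simp add: iid_expectation_scale iid_expectation_sum split_beta)
  also have "\<dots> \<le> ?B * (\<Sum>(a, b)\<in>misordered_pairs. 4 / (real t * (P a - P b)\<^sup>2))"
    using assms(2) by (intro mult_left_mono sum_mono sum_nonneg)
      (auto simp: misordered_pairs_def intro: iid_expectation_count_le_count)
  also have "\<dots> = ?B * ((\<Sum>(a, b)\<in>misordered_pairs. 4 / (P a - P b)\<^sup>2) / real t)"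
    unfolding sum_divide_distrib by (simp add: split_beta mult.commute)
  finally show ?thesis
    by simp
qed

lemma expected_step_cost_tendsto:
  assumes "ranking W (\<lambda>_. 0) L\<^sub>0"
  shows "(\<lambda>t. iid_expectation W P t (\<lambda>xs. step_cost c ys (fst (foldl shaping_step (L\<^sub>0, \<lambda>_. 0) xs))))
    \<longlonglongrightarrow> optimal_cost c ys"
proof -
  let ?g = "\<lambda>t. iid_expectation W P t (\<lambda>xs. step_cost c ys (fst (foldl shaping_step (L\<^sub>0, \<lambda>_. 0) xs)))"
  let ?C = "(\<Sum>i<length ws. \<bar>c (ys ! i)\<bar>) * (\<Sum>(a, b)\<in>misordered_pairs. 4 / (P a - P b)\<^sup>2)"
  have "\<forall>\<^sub>F t in sequentially. norm (?g t - optimal_cost c ys) \<le> norm (1 / real t) * ?C"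
    using expected_step_cost_deviation[OF assms, of _ c ys]
    by (intro eventually_sequentiallyI[of 1]) (simp add: Suc_le_eq)
  then have "(\<lambda>t. ?g t - optimal_cost c ys) \<longlonglongrightarrow> 0"
    by (rule tendsto_0_le[OF lim_inverse_n'])
  then show ?thesis
    by (rule LIM_zero_cancel)
qed

end

lemma expected_avg_cost_eq:
  "expected_avg_cost m P c ys t
    = iid_expectation {w. length w = m} P t (\<lambda>xs. sum_list (map c (phi m ys xs))) / real t"
proof -
  have words: "{xs. length xs = t \<and> (\<forall>x\<in>set xs. length x = m)}
      = {xs. set xs \<subseteq> {w. length w = m} \<and> length xs = t}"
    by auto
  show ?thesis
    unfolding expected_avg_cost_def iid_expectation_def words sum_divide_distrib by simp
qed

theorem theorem4:
  fixes m :: nat and P c :: "bool list \<Rightarrow> real" and ws ys :: "bool list list"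
  assumes "m \<ge> 1"
    and "\<forall>w. length w = m \<longrightarrow> P w \<ge> 0"
    and "(\<Sum>w\<in>{w. length w = m}. P w) = 1"
    and "distinct ws" and "set ws = {w. length w = m}"
    and "sorted_wrt (\<lambda>a b. P a \<ge> P b) ws"
    and "distinct ys" and "set ys = {w. length w = m}"
    and "sorted_wrt (\<lambda>a b. c a \<le> c b) ys"
  shows "(\<lambda>t. expected_avg_cost m P c ys t) \<longlonglongrightarrow> (\<Sum>i<2^m. P (ws ! i) * c (ys ! i))"
proof -
  define W where "W = {w :: bool list. length w = m}"
  have card_W: "card W = 2 ^ m" and "finite W"
    using card_lists_length_eq[of "UNIV :: bool set" m] finite_lists_length_eq[of "UNIV :: bool set" m]
    by (simp_all add: W_def)
  interpret ranked_source W P ws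
    using assms(2-6) \<open>finite W\<close> by unfold_locales (simp_all add: W_def)
  have "length ws = 2 ^ m"
    using distinct_card[OF assms(4)] assms(5) card_W by (simp add: W_def)
  have "ranking W (\<lambda>_. 0) (lex_words m)"
    by (simp add: ranking_def W_def set_lex_words distinct_lex_words)
  then have "(\<lambda>t. iid_expectation W P t (\<lambda>xs. step_cost c ys
      (fst (foldl shaping_step (lex_words m, \<lambda>_. 0) xs)))) \<longlonglongrightarrow> optimal_cost c ys"
    by (rule expected_step_cost_tendsto)
  then have "(\<lambda>t. iid_expectation W P t (\<lambda>xs. sum_list (map c (phi m ys xs))) / real t)
      \<longlonglongrightarrow> optimal_cost c ys"
    unfolding phi_def iid_expectation_encode_cost by (rule Cesaro_mean_tendsto)
  then show ?thesis
    by (simp add: expected_avg_cost_eq W_def optimal_cost_def \<open>length ws = 2 ^ m\<close>)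
qed

end
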